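(* Let $\beta\in\mathbb{N}^n$. The linear operators on $\mathbb{C}[z_1,\ldots,z_n]$ defined by $z^\alpha\mapsto J(\alpha,\beta)z^\alpha$ ($\alpha\in\mathbb{N}^n$) and by $z^\alpha\mapsto(\beta)_\alpha z^\alpha$ ($\alpha\in\mathbb{N}^n$) preserve stability.
   Context: $H=\{z\in\mathbb{C}:\Im(z)>0\}$; a polynomial is stable if it is non-zero whenever all variables lie in $H$; a linear operator preserves stability if it maps each stable polynomial to a stable polynomial or to $0$. $(\beta)_\alpha=\beta!/(\beta-\alpha)!=\prod_i\beta_i!/(\beta_i-\alpha_i)!$ if $\alpha_i\le\beta_i$ for all $i$, and $0$ otherwise. $J(\alpha,\beta)=(\beta)_\alpha\beta^{-\alpha}$ with $\beta^{-\alpha}=\prod_i\beta_i^{-\alpha_i}$, using the convention $k^{\pm k}=1$ for $k=0$. *)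

theory Defs
  imports Complex_Main
begin

text \<open>Polynomials in the variables z_i, i ranging over a finite index type 'n
  (so n = CARD('n)), with complex coefficients, are represented by their
  coefficient functions: p :: ('n \<Rightarrow> nat) \<Rightarrow> complex with finite support;
  p alpha is the coefficient of the monomial z^alpha.\<close>

definition is_mpoly :: "(('n::finite \<Rightarrow> nat) \<Rightarrow> complex) \<Rightarrow> bool" where
  "is_mpoly p \<longleftrightarrow> finite {\<alpha>. p \<alpha> \<noteq> 0}"

definition mpoly_eval :: "(('n::finite \<Rightarrow> nat) \<Rightarrow> complex) \<Rightarrow> ('n \<Rightarrow> complex) \<Rightarrow> complex" where
  "mpoly_eval p z = (\<Sum>\<alpha>\<in>{\<alpha>. p \<alpha> \<noteq> 0}. p \<alpha> * (\<Prod>i\<in>UNIV. z i ^ \<alpha> i))"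

definition stable :: "(('n::finite \<Rightarrow> nat) \<Rightarrow> complex) \<Rightarrow> bool" where
  "stable p \<longleftrightarrow> (\<forall>z. (\<forall>i. Im (z i) > 0) \<longrightarrow> mpoly_eval p z \<noteq> 0)"

definition preserves_stability ::
  "((('n::finite \<Rightarrow> nat) \<Rightarrow> complex) \<Rightarrow> (('n \<Rightarrow> nat) \<Rightarrow> complex)) \<Rightarrow> bool" where
  "preserves_stability T \<longleftrightarrow>
     (\<forall>p. is_mpoly p \<and> stable p \<longrightarrow> stable (T p) \<or> T p = (\<lambda>_. 0))"

definition diag_op :: "(('n \<Rightarrow> nat) \<Rightarrow> complex) \<Rightarrow> (('n \<Rightarrow> nat) \<Rightarrow> complex) \<Rightarrow> (('n \<Rightarrow> nat) \<Rightarrow> complex)" where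
  "diag_op c p = (\<lambda>\<alpha>. c \<alpha> * p \<alpha>)"

definition falling_multi :: "('n::finite \<Rightarrow> nat) \<Rightarrow> ('n \<Rightarrow> nat) \<Rightarrow> real" where
  "falling_multi \<beta> \<alpha> =
     (if \<forall>i. \<alpha> i \<le> \<beta> i then (\<Prod>i\<in>UNIV. fact (\<beta> i) / fact (\<beta> i - \<alpha> i)) else 0)"

definition J :: "('n::finite \<Rightarrow> nat) \<Rightarrow> ('n \<Rightarrow> nat) \<Rightarrow> real" where
  "J \<alpha> \<beta> = falling_multi \<beta> \<alpha> * (\<Prod>i\<in>UNIV. inverse (real (\<beta> i) ^ \<alpha> i))"

end

theory Submission
  imports Defs "HOL-Complex_Analysis.Great_Picard"
    "HOL-Computational_Algebra.Fundamental_Theorem_Algebra"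
begin

text \<open>Both multipliers are products over i of one-variable multipliers: (beta_i)_(alpha_i), times
  the positive rescaling z_i \<mapsto> z_i / beta_i for J. Rescalings and compositions preserve
  stability, so it suffices to treat z^alpha \<mapsto> (b)_(alpha_i) z^alpha for one variable z_i.
  With the other variables fixed in the upper half-plane, let G(x) be q with z_i = x; then the
  image of q at z equals ((1 + z_i D)^b G)(0). For Im y > 0 the operator 1 + y D keeps G free of
  zeros in the upper half-plane and non-zero at a real point where G is non-zero, because
  Im (G'/G) \<le> 0 on the closed upper half-plane. This needs G(0) \<noteq> 0; if instead q vanishes at
  a point with z_i = 0, Hurwitz's theorem shows that q vanishes identically on z_i = 0, so z_i
  divides q and induction on b applies.\<close>

definition falling_fact :: "nat \<Rightarrow> nat \<Rightarrow> complex" where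
  "falling_fact b k = (\<Prod>j<k. of_nat b - of_nat j)"

lemma falling_fact_0 [simp]: "falling_fact b 0 = 1"
  by (simp add: falling_fact_def)

lemma falling_fact_Suc: "falling_fact b (Suc k) = falling_fact b k * (of_nat b - of_nat k)"
  by (simp add: falling_fact_def)

lemma falling_fact_Suc_Suc: "falling_fact (Suc b) (Suc k) = of_nat (Suc b) * falling_fact b k"
  unfolding falling_fact_def by (subst prod.lessThan_Suc_shift) simp

lemma falling_fact_Suc_pascal:
  "falling_fact (Suc b) (Suc k) = falling_fact b (Suc k) + of_nat (Suc k) * falling_fact b k"
  by (subst falling_fact_Suc_Suc, subst falling_fact_Suc) (simp add: algebra_simps)

lemma falling_fact_eq_0: "b < k \<Longrightarrow> falling_fact b k = 0"
  unfolding falling_fact_def by (rule prod_zero) auto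

lemma falling_fact_eq_fact_div: "k \<le> b \<Longrightarrow> falling_fact b k = fact b / fact (b - k)"
proof (induction k)
  case (Suc k)
  have "b - k = Suc (b - Suc k)"
    using Suc.prems by simp
  then have "fact (b - k) = (of_nat b - of_nat k) * (fact (b - Suc k) :: complex)"
    using Suc.prems by (simp only: fact_Suc) simp
  moreover have "(of_nat b - of_nat k :: complex) \<noteq> 0"
    using Suc.prems by simp
  ultimately show ?case
    using Suc by (simp add: falling_fact_Suc)
qed simp

definition pderiv_shift :: "complex \<Rightarrow> complex poly \<Rightarrow> complex poly" where
  "pderiv_shift y G = G + smult y (pderiv G)"

text \<open>In (1 + y D)^b G evaluated at 0, the term (b choose k) y^k D^k G(0) equals (b)_k G_k y^k.\<close>
lemma poly_pderiv_shift_funpow_at_0: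
  "poly ((pderiv_shift y ^^ b) G) 0 = (\<Sum>k\<le>b. falling_fact b k * coeff G k * y ^ k)"
proof (induction b arbitrary: G)
  case 0
  then show ?case by (simp add: poly_0_coeff_0)
next
  case (Suc b)
  let ?f = "\<lambda>b k. falling_fact b k * coeff G k * y ^ k"
  have "poly ((pderiv_shift y ^^ Suc b) G) 0 = poly ((pderiv_shift y ^^ b) (pderiv_shift y G)) 0"
    by (simp add: funpow_Suc_right del: funpow.simps)
  also have "\<dots> = (\<Sum>k\<le>b. ?f b k) + (\<Sum>k\<le>b. of_nat (Suc k) * falling_fact b k * coeff G (Suc k) * y ^ Suc k)"
    by (simp add: Suc.IH pderiv_shift_def coeff_pderiv algebra_simps sum.distrib)
  also have "(\<Sum>k\<le>b. ?f b k) = (\<Sum>k\<le>Suc b. ?f b k)"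
    by (simp add: falling_fact_eq_0)
  also have "\<dots> = coeff G 0 + (\<Sum>k\<le>b. ?f b (Suc k))"
    by (subst sum.atMost_Suc_shift) simp
  also have "coeff G 0 + (\<Sum>k\<le>b. ?f b (Suc k)) +
      (\<Sum>k\<le>b. of_nat (Suc k) * falling_fact b k * coeff G (Suc k) * y ^ Suc k) =
      coeff G 0 + (\<Sum>k\<le>b. ?f (Suc b) (Suc k))"
    by (simp add: falling_fact_Suc_pascal sum.distrib algebra_simps)
  also have "\<dots> = (\<Sum>k\<le>Suc b. ?f (Suc b) k)"
    by (subst sum.atMost_Suc_shift) simp
  finally show ?case .
qed

definition stable_poly :: "complex poly \<Rightarrow> bool" where
  "stable_poly G \<longleftrightarrow> (\<forall>x. 0 < Im x \<longrightarrow> poly G x \<noteq> 0)"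

text \<open>G'/G is the sum of 1/(x - r) over the roots r of G, which all lie in the closed lower
  half-plane.\<close>
lemma Im_pderiv_div_poly_nonpos:
  fixes G :: "complex poly"
  assumes "stable_poly G" "0 \<le> Im x" "poly G x \<noteq> 0"
  shows "Im (poly (pderiv G) x / poly G x) \<le> 0"
  using assms
proof (induction "degree G" arbitrary: G rule: less_induct)
  case less
  show ?case
  proof (cases "degree G = 0")
    case True
    then have "pderiv G = 0"
      by (simp add: pderiv_eq_0_iff)
    then show ?thesis
      by simp
  next
    case False
    then obtain r where r: "poly G r = 0"
      using fundamental_theorem_of_algebra constant_degree by metis
    then obtain h where h: "G = [:-r, 1:] * h"
      by (metis dvdE poly_eq_0_iff_dvd)
    have "Im r \<le> 0"
      using less.prems(1) r by (metis not_le stable_poly_def)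
    then have Im_root: "Im (1 / (x - r)) \<le> 0"
      using less.prems(2) by (simp add: Im_divide divide_nonpos_nonneg)
    have "h \<noteq> 0"
      using h False by auto
    then have "degree h < degree G"
      unfolding h by (subst degree_mult_eq) auto
    have poly_G: "\<And>x. poly G x = (x - r) * poly h x"
      by (simp add: h algebra_simps)
    then have "stable_poly h" "poly h x \<noteq> 0" "x - r \<noteq> 0"
      using less.prems by (auto simp: stable_poly_def)
    with less.hyps \<open>degree h < degree G\<close> less.prems(2)
    have IH: "Im (poly (pderiv h) x / poly h x) \<le> 0"
      by blast
    have "poly (pderiv G) x = poly h x + (x - r) * poly (pderiv h) x"
      by (simp add: h pderiv_mult pderiv_pCons pderiv_diff pderiv_smult algebra_simps)
    then have "poly (pderiv G) x / poly G x = 1 / (x - r) + poly (pderiv h) x / poly h x"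
      using \<open>poly h x \<noteq> 0\<close> \<open>x - r \<noteq> 0\<close> by (simp add: poly_G field_simps)
    then show ?thesis
      using IH Im_root by simp
  qed
qed

lemma poly_pderiv_shift_nonzero:
  assumes "stable_poly G" "0 \<le> Im x" "poly G x \<noteq> 0" "0 < Im y"
  shows "poly (pderiv_shift y G) x \<noteq> 0"
proof
  assume "poly (pderiv_shift y G) x = 0"
  define \<sigma> where "\<sigma> = poly (pderiv G) x / poly G x"
  have "y \<noteq> 0"
    using assms(4) by auto
  have "poly G x * (1 + y * \<sigma>) = 0"
    using \<open>poly (pderiv_shift y G) x = 0\<close> assms(3) by (simp add: pderiv_shift_def \<sigma>_def field_simps)
  then have "y * \<sigma> = - 1"
    using assms(3) by (simp add: add_eq_0_iff)
  then have "\<sigma> = - 1 / y"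
    using \<open>y \<noteq> 0\<close> by (simp add: field_simps)
  moreover have "0 < Im (- 1 / y)"
    using assms(4) by (simp add: Im_divide sum_power2_gt_zero_iff)
  moreover have "Im \<sigma> \<le> 0"
    unfolding \<sigma>_def using Im_pderiv_div_poly_nonpos assms by blast
  ultimately show False
    by simp
qed

lemma stable_poly_pderiv_shift_funpow:
  assumes "stable_poly G" "0 \<le> Im x" "poly G x \<noteq> 0" "0 < Im y"
  shows "stable_poly ((pderiv_shift y ^^ b) G) \<and> poly ((pderiv_shift y ^^ b) G) x \<noteq> 0"
proof (induction b)
  case (Suc b)
  then show ?case
    using poly_pderiv_shift_nonzero assms(2,4) by (auto simp: stable_poly_def less_imp_le)
qed (use assms in simp)

definition monom_eval :: "('n::finite \<Rightarrow> complex) \<Rightarrow> ('n \<Rightarrow> nat) \<Rightarrow> complex" where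
  "monom_eval z \<alpha> = (\<Prod>j\<in>UNIV. z j ^ \<alpha> j)"

definition monom_eval_except :: "('n::finite \<Rightarrow> complex) \<Rightarrow> 'n \<Rightarrow> ('n \<Rightarrow> nat) \<Rightarrow> complex" where
  "monom_eval_except z i \<alpha> = (\<Prod>j\<in>UNIV - {i}. z j ^ \<alpha> j)"

lemma mpoly_eval_eq_sum_superset:
  assumes "finite S" "{\<alpha>. q \<alpha> \<noteq> 0} \<subseteq> S"
  shows "mpoly_eval q z = (\<Sum>\<alpha>\<in>S. q \<alpha> * monom_eval z \<alpha>)"
  unfolding mpoly_eval_def monom_eval_def using assms by (intro sum.mono_neutral_left) auto

lemma monom_eval_split: "monom_eval z \<alpha> = z i ^ \<alpha> i * monom_eval_except z i \<alpha>"
  unfolding monom_eval_def monom_eval_except_def by (subst prod.remove[of UNIV i]) auto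

lemma monom_eval_except_upd [simp]: "monom_eval_except (z(i := x)) i \<alpha> = monom_eval_except z i \<alpha>"
  unfolding monom_eval_except_def by (intro prod.cong) auto

lemma monom_eval_upd: "monom_eval (z(i := x)) \<alpha> = x ^ \<alpha> i * monom_eval_except z i \<alpha>"
  by (subst monom_eval_split[of _ _ i]) simp

lemma mpoly_eval_cmult:
  assumes "is_mpoly q"
  shows "mpoly_eval (\<lambda>\<alpha>. c * q \<alpha>) z = c * mpoly_eval q z"
proof -
  have "mpoly_eval (\<lambda>\<alpha>. c * q \<alpha>) z = (\<Sum>\<alpha>\<in>{\<alpha>. q \<alpha> \<noteq> 0}. c * q \<alpha> * monom_eval z \<alpha>)"
    using assms unfolding is_mpoly_def by (intro mpoly_eval_eq_sum_superset) auto
  then show ?thesis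
    by (simp add: mpoly_eval_def monom_eval_def sum_distrib_left mult.assoc)
qed

lemma mpoly_eval_scale_var:
  assumes "is_mpoly q"
  shows "mpoly_eval (\<lambda>\<alpha>. c ^ \<alpha> i * q \<alpha>) z = mpoly_eval q (z(i := c * z i))"
proof -
  have "mpoly_eval (\<lambda>\<alpha>. c ^ \<alpha> i * q \<alpha>) z = (\<Sum>\<alpha>\<in>{\<alpha>. q \<alpha> \<noteq> 0}. c ^ \<alpha> i * q \<alpha> * monom_eval z \<alpha>)"
    using assms unfolding is_mpoly_def by (intro mpoly_eval_eq_sum_superset) auto
  also have "\<dots> = (\<Sum>\<alpha>\<in>{\<alpha>. q \<alpha> \<noteq> 0}. q \<alpha> * monom_eval (z(i := c * z i)) \<alpha>)"
    by (intro sum.cong refl) (simp add: monom_eval_upd monom_eval_split[of z _ i] power_mult_distrib)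
  finally show ?thesis
    by (simp add: mpoly_eval_def monom_eval_def)
qed

lemma is_mpoly_diag_op: "is_mpoly q \<Longrightarrow> is_mpoly (diag_op c q)"
  unfolding is_mpoly_def diag_op_def by (rule finite_subset[of _ "{\<alpha>. q \<alpha> \<noteq> 0}"]) auto

definition var_poly :: "(('n::finite \<Rightarrow> nat) \<Rightarrow> complex) \<Rightarrow> ('n \<Rightarrow> complex) \<Rightarrow> 'n \<Rightarrow> complex poly" where
  "var_poly q z i = (\<Sum>\<alpha>\<in>{\<alpha>. q \<alpha> \<noteq> 0}. monom (q \<alpha> * monom_eval_except z i \<alpha>) (\<alpha> i))"

lemma poly_var_poly: "poly (var_poly q z i) x = mpoly_eval q (z(i := x))"
proof -
  have "poly (var_poly q z i) x =
      (\<Sum>\<alpha>\<in>{\<alpha>. q \<alpha> \<noteq> 0}. q \<alpha> * (x ^ \<alpha> i * monom_eval_except z i \<alpha>))"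
    unfolding var_poly_def by (simp add: poly_sum poly_monom algebra_simps)
  then show ?thesis
    unfolding mpoly_eval_def by (simp only: monom_eval_upd flip: monom_eval_def)
qed

lemma coeff_var_poly:
  "coeff (var_poly q z i) k =
     (\<Sum>\<alpha>\<in>{\<alpha>. q \<alpha> \<noteq> 0}. if \<alpha> i = k then q \<alpha> * monom_eval_except z i \<alpha> else 0)"
  unfolding var_poly_def by (simp add: coeff_sum)

definition var_slice :: "'n \<Rightarrow> nat \<Rightarrow> (('n::finite \<Rightarrow> nat) \<Rightarrow> complex) \<Rightarrow> (('n \<Rightarrow> nat) \<Rightarrow> complex)" where
  "var_slice i k q = (\<lambda>\<alpha>. if \<alpha> i = k then q \<alpha> else 0)"

lemma is_mpoly_var_slice: "is_mpoly q \<Longrightarrow> is_mpoly (var_slice i k q)"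
  unfolding is_mpoly_def var_slice_def by (rule finite_subset[of _ "{\<alpha>. q \<alpha> \<noteq> 0}"]) auto

lemma mpoly_eval_var_slice:
  assumes "is_mpoly q"
  shows "mpoly_eval (var_slice i k q) z = z i ^ k * coeff (var_poly q z i) k"
proof -
  have "mpoly_eval (var_slice i k q) z = (\<Sum>\<alpha>\<in>{\<alpha>. q \<alpha> \<noteq> 0}. var_slice i k q \<alpha> * monom_eval z \<alpha>)"
    using assms unfolding is_mpoly_def by (intro mpoly_eval_eq_sum_superset) (auto simp: var_slice_def)
  also have "\<dots> = (\<Sum>\<alpha>\<in>{\<alpha>. q \<alpha> \<noteq> 0}. z i ^ k * (if \<alpha> i = k then q \<alpha> * monom_eval_except z i \<alpha> else 0))"
    by (intro sum.cong refl) (auto simp: var_slice_def monom_eval_split[of z _ i])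
  finally show ?thesis
    by (simp add: coeff_var_poly sum_distrib_left)
qed

lemma mpoly_eval_diag_falling:
  assumes "is_mpoly q"
  shows "mpoly_eval (diag_op (\<lambda>\<alpha>. falling_fact b (\<alpha> i)) q) z =
    poly ((pderiv_shift (z i) ^^ b) (var_poly q z i)) 0"
proof -
  let ?S = "{\<alpha>. q \<alpha> \<noteq> 0}"
  let ?t = "\<lambda>k \<alpha>. if \<alpha> i = k then falling_fact b k * (q \<alpha> * monom_eval_except z i \<alpha>) * z i ^ k else 0"
  have "mpoly_eval (diag_op (\<lambda>\<alpha>. falling_fact b (\<alpha> i)) q) z =
      (\<Sum>\<alpha>\<in>?S. falling_fact b (\<alpha> i) * q \<alpha> * monom_eval z \<alpha>)"
    using assms unfolding is_mpoly_def by (subst mpoly_eval_eq_sum_superset[of ?S]) (auto simp: diag_op_def)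
  also have "\<dots> = (\<Sum>\<alpha>\<in>?S. \<Sum>k\<le>b. ?t k \<alpha>)"
  proof (intro sum.cong refl)
    fix \<alpha> :: "'a \<Rightarrow> nat"
    show "falling_fact b (\<alpha> i) * q \<alpha> * monom_eval z \<alpha> = (\<Sum>k\<le>b. ?t k \<alpha>)"
      by (cases "\<alpha> i \<le> b") (auto simp: falling_fact_eq_0 monom_eval_split[of z _ i] algebra_simps)
  qed
  also have "\<dots> = (\<Sum>k\<le>b. \<Sum>\<alpha>\<in>?S. ?t k \<alpha>)"
    by (rule sum.swap)
  also have "\<dots> = (\<Sum>k\<le>b. falling_fact b k * coeff (var_poly q z i) k * z i ^ k)"
    unfolding coeff_var_poly sum_distrib_left sum_distrib_right by (intro sum.cong refl) auto
  finally show ?thesis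
    by (simp add: poly_pderiv_shift_funpow_at_0)
qed

definition times_var :: "'n \<Rightarrow> (('n::finite \<Rightarrow> nat) \<Rightarrow> complex) \<Rightarrow> (('n \<Rightarrow> nat) \<Rightarrow> complex)" where
  "times_var i r = (\<lambda>\<alpha>. if \<alpha> i = 0 then 0 else r (\<alpha>(i := \<alpha> i - 1)))"

definition div_var :: "'n \<Rightarrow> (('n::finite \<Rightarrow> nat) \<Rightarrow> complex) \<Rightarrow> (('n \<Rightarrow> nat) \<Rightarrow> complex)" where
  "div_var i q = (\<lambda>\<alpha>. q (\<alpha>(i := Suc (\<alpha> i))))"

lemma times_var_div_var: "(\<And>\<alpha>. \<alpha> i = 0 \<Longrightarrow> q \<alpha> = 0) \<Longrightarrow> times_var i (div_var i q) = q"
  by (auto simp: times_var_def div_var_def fun_eq_iff)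

lemma is_mpoly_div_var:
  assumes "is_mpoly q"
  shows "is_mpoly (div_var i q)"
proof -
  have "{\<alpha>. div_var i q \<alpha> \<noteq> 0} \<subseteq> (\<lambda>\<alpha>. \<alpha>(i := \<alpha> i - 1)) ` {\<alpha>. q \<alpha> \<noteq> 0}"
  proof
    fix \<alpha> assume "\<alpha> \<in> {\<alpha>. div_var i q \<alpha> \<noteq> 0}"
    then have "\<alpha>(i := Suc (\<alpha> i)) \<in> {\<alpha>. q \<alpha> \<noteq> 0}"
      by (simp add: div_var_def)
    moreover have "\<alpha> = (\<alpha>(i := Suc (\<alpha> i)))(i := (\<alpha>(i := Suc (\<alpha> i))) i - 1)"
      by simp
    ultimately show "\<alpha> \<in> (\<lambda>\<alpha>. \<alpha>(i := \<alpha> i - 1)) ` {\<alpha>. q \<alpha> \<noteq> 0}"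
      by blast
  qed
  then show ?thesis
    using assms unfolding is_mpoly_def by (meson finite_imageI finite_subset)
qed

lemma mpoly_eval_times_var:
  assumes "is_mpoly r"
  shows "mpoly_eval (times_var i r) z = z i * mpoly_eval r z"
proof -
  let ?S = "{\<alpha>. r \<alpha> \<noteq> 0}"
  define up where "up \<alpha> = \<alpha>(i := Suc (\<alpha> i))" for \<alpha> :: "'a \<Rightarrow> nat"
  have "inj up"
    by (auto simp: inj_def up_def fun_eq_iff split: if_splits)
  have "{\<alpha>. times_var i r \<alpha> \<noteq> 0} \<subseteq> up ` ?S"
  proof
    fix \<alpha> assume "\<alpha> \<in> {\<alpha>. times_var i r \<alpha> \<noteq> 0}"
    then have "\<alpha> i \<noteq> 0" "\<alpha>(i := \<alpha> i - 1) \<in> ?S"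
      by (auto simp: times_var_def split: if_splits)
    moreover have "\<alpha> = up (\<alpha>(i := \<alpha> i - 1))"
      using \<open>\<alpha> i \<noteq> 0\<close> by (auto simp: up_def fun_eq_iff)
    ultimately show "\<alpha> \<in> up ` ?S"
      by blast
  qed
  then have "mpoly_eval (times_var i r) z = (\<Sum>\<alpha>\<in>up ` ?S. times_var i r \<alpha> * monom_eval z \<alpha>)"
    using assms unfolding is_mpoly_def by (intro mpoly_eval_eq_sum_superset) auto
  also have "\<dots> = (\<Sum>\<alpha>\<in>?S. times_var i r (up \<alpha>) * monom_eval z (up \<alpha>))"
    using \<open>inj up\<close> by (simp add: sum.reindex inj_on_subset)
  also have "\<dots> = (\<Sum>\<alpha>\<in>?S. z i * (r \<alpha> * monom_eval z \<alpha>))"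
    by (intro sum.cong refl)
      (simp add: times_var_def up_def monom_eval_split[of z _ i] monom_eval_except_def)
  also have "\<dots> = z i * mpoly_eval r z"
    by (simp add: mpoly_eval_def monom_eval_def sum_distrib_left)
  finally show ?thesis .
qed

abbreviation in_upper :: "('n \<Rightarrow> complex) \<Rightarrow> bool" where
  "in_upper z \<equiv> \<forall>j. 0 < Im (z j)"

lemma stable_poly_var_poly: "stable q \<Longrightarrow> in_upper z \<Longrightarrow> stable_poly (var_poly q z i)"
  by (simp add: stable_poly_def stable_def poly_var_poly)

lemma mpoly_eval_var_slice_eq_0:
  assumes "is_mpoly q" "\<And>z. in_upper z \<Longrightarrow> mpoly_eval q z = 0" "in_upper z"
  shows "mpoly_eval (var_slice i k q) z = 0"
proof -
  have "{x. 0 < Im x} \<subseteq> {x. poly (var_poly q z i) x = 0}"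
    using assms(2,3) by (auto simp: poly_var_poly)
  then have "var_poly q z i = 0"
    using poly_roots_finite uncountable_halfspace_Im_gt uncountable_infinite finite_subset by metis
  then show ?thesis
    using assms(1) by (simp add: mpoly_eval_var_slice)
qed

text \<open>Slicing off the exponent of one variable at a time isolates a single coefficient.\<close>
lemma mpoly_eq_0_if_vanishes_on_upper:
  assumes "is_mpoly q" "\<And>z. in_upper z \<Longrightarrow> mpoly_eval q z = 0"
  shows "q = (\<lambda>_. 0)"
proof
  fix \<alpha>0 :: "'a::finite \<Rightarrow> nat"
  define Q where "Q I = (\<lambda>\<alpha>. if \<forall>j\<in>I. \<alpha> j = \<alpha>0 j then q \<alpha> else 0)" for I
  have "finite I \<Longrightarrow> is_mpoly (Q I) \<and> (\<forall>z. in_upper z \<longrightarrow> mpoly_eval (Q I) z = 0)" for I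
  proof (induction I rule: finite_induct)
    case empty
    then show ?case
      using assms by (simp add: Q_def)
  next
    case (insert j I)
    have "Q (insert j I) = var_slice j (\<alpha>0 j) (Q I)"
      by (auto simp: Q_def var_slice_def)
    then show ?case
      using insert.IH by (auto intro: is_mpoly_var_slice mpoly_eval_var_slice_eq_0)
  qed
  from this[of UNIV] have "mpoly_eval (Q UNIV) (\<lambda>_. \<i>) = 0"
    by simp
  moreover have "Q UNIV = (\<lambda>\<alpha>. if \<alpha> = \<alpha>0 then q \<alpha> else 0)"
    by (auto simp: Q_def fun_eq_iff)
  then have "mpoly_eval (Q UNIV) (\<lambda>_. \<i>) = q \<alpha>0 * monom_eval (\<lambda>_. \<i>) \<alpha>0"
    by (subst mpoly_eval_eq_sum_superset[of "{\<alpha>0}"]) auto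
  moreover have "monom_eval (\<lambda>_. \<i>) \<alpha>0 \<noteq> 0"
    by (simp add: monom_eval_def)
  ultimately show "q \<alpha>0 = 0"
    by simp
qed

lemma uniform_limit_joint_continuous:
  fixes f :: "'a::heine_borel \<Rightarrow> 'b::metric_space \<Rightarrow> 'c::metric_space"
  assumes cont: "continuous_on UNIV (\<lambda>p. f (fst p) (snd p))"
    and lim: "s \<longlonglongrightarrow> s0" and "compact K"
  shows "uniform_limit K (\<lambda>n. f (s n)) (f s0) sequentially"
  unfolding uniform_limit_iff
proof (intro allI impI)
  fix e :: real assume "0 < e"
  let ?C = "cball s0 1 \<times> K"
  have "uniformly_continuous_on ?C (\<lambda>p. f (fst p) (snd p))"
    using \<open>compact K\<close> by (intro compact_uniformly_continuous continuous_on_subset[OF cont])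
      (auto intro: compact_Times)
  then obtain d where "0 < d"
    and d: "\<And>x x'. x \<in> ?C \<Longrightarrow> x' \<in> ?C \<Longrightarrow> dist x' x < d \<Longrightarrow>
      dist (f (fst x') (snd x')) (f (fst x) (snd x)) < e"
    using \<open>0 < e\<close> unfolding uniformly_continuous_on_def by metis
  have "\<forall>\<^sub>F n in sequentially. dist (s n) s0 < min d 1"
    using lim \<open>0 < d\<close> by (intro tendstoD) auto
  then show "\<forall>\<^sub>F n in sequentially. \<forall>t\<in>K. dist (f (s n) t) (f s0 t) < e"
  proof eventually_elim
    case (elim n)
    show ?case
    proof
      fix t assume "t \<in> K"
      with elim have "(s n, t) \<in> ?C" "(s0, t) \<in> ?C" "dist (s n, t) (s0, t) < d"
        by (auto simp: dist_commute dist_Pair_Pair)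
      then show "dist (f (s n) t) (f s0 t) < e"
        using d by fastforce
    qed
  qed
qed

text \<open>Hurwitz's theorem along the segment from z0 to z1, applied to the zero-free functions
  obtained by setting z_i to i/(n+1) instead of 0.\<close>
lemma stable_upd_0_vanishes_everywhere:
  assumes "stable q" "in_upper z0" "mpoly_eval q (z0(i := 0)) = 0" "in_upper z1"
  shows "mpoly_eval q (z1(i := 0)) = 0"
proof -
  \<comment> \<open>The point is written as a + t v + s e, so that continuity and holomorphy in (s, t) are
    found by the introduction rules.\<close>
  define a where "a = (\<lambda>j. if j = i then 0 else z0 j)"
  define v where "v = (\<lambda>j. if j = i then 0 else z1 j - z0 j)"
  define e where "e = (\<lambda>j. if j = i then 1 else (0::complex))"
  define \<Phi> where "\<Phi> s t = mpoly_eval q (\<lambda>j. a j + t * v j + s * e j)" for s t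
  define S where "S = (\<Inter>j. (\<lambda>t. t * (z1 j - z0 j)) -` {w. - Im (z0 j) < Im w})"
  have S_iff: "t \<in> S \<longleftrightarrow> (\<forall>j. 0 < Im (z0 j + t * (z1 j - z0 j)))" for t
  proof -
    have "- Im (z0 j) < Im (t * (z1 j - z0 j)) \<longleftrightarrow> 0 < Im (z0 j + t * (z1 j - z0 j))" for j
      by (simp only: plus_complex.sel) linarith
    then show ?thesis
      unfolding S_def by blast
  qed
  have point: "(\<lambda>j. a j + t * v j + s * e j) = (\<lambda>j. if j = i then s else z0 j + t * (z1 j - z0 j))"
    for s t by (auto simp: a_def v_def e_def fun_eq_iff)
  have "open S"
    unfolding S_def by (intro open_INT ballI open_vimage open_halfspace_Im_gt continuous_intros) simp
  moreover have "connected S"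
    unfolding S_def by (intro convex_connected convex_INT convex_linear_vimage convex_halfspace_Im_gt
        bounded_linear.linear[OF bounded_linear_mult_left])
  moreover have "\<Phi> (\<i> / of_nat (Suc n)) t \<noteq> 0" if "t \<in> S" for n t
    using assms(1) that unfolding \<Phi>_def point stable_def S_iff by auto
  moreover have "(\<lambda>t. \<Phi> s t) holomorphic_on S" for s
    unfolding \<Phi>_def mpoly_eval_def by (intro holomorphic_intros)
  moreover have "uniform_limit K (\<lambda>n. \<Phi> (\<i> / of_nat (Suc n))) (\<Phi> 0) sequentially" if "compact K" for K
  proof (rule uniform_limit_joint_continuous[OF _ _ that])
    show "continuous_on UNIV (\<lambda>p. \<Phi> (fst p) (snd p))"
      unfolding \<Phi>_def mpoly_eval_def by (intro continuous_intros)
    have "(\<lambda>n. \<i> * (1 / of_nat (Suc n))) \<longlonglongrightarrow> \<i> * 0"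
      by (intro tendsto_mult_left LIMSEQ_Suc lim_1_over_n)
    then show "(\<lambda>n. \<i> / of_nat (Suc n)) \<longlonglongrightarrow> 0"
      by simp
  qed
  moreover have "0 \<in> S" "1 \<in> S"
    using assms(2,4) by (auto simp: S_iff)
  ultimately have "\<Phi> 0 constant_on S \<or> \<Phi> 0 0 \<noteq> 0"
    using Hurwitz_no_zeros[of S "\<lambda>n. \<Phi> (\<i> / of_nat (Suc n))" "\<Phi> 0" 0] by blast
  moreover have "\<Phi> 0 0 = 0" "\<Phi> 0 1 = mpoly_eval q (z1(i := 0))"
    using assms(3) unfolding \<Phi>_def point by (simp_all add: fun_upd_def cong: if_cong)
  ultimately show ?thesis
    using \<open>0 \<in> S\<close> \<open>1 \<in> S\<close> unfolding constant_on_def by metis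
qed

lemma stable_var_factor:
  assumes "is_mpoly q" "stable q" "in_upper z0" "mpoly_eval q (z0(i := 0)) = 0"
  obtains r where "q = times_var i r" "is_mpoly r" "stable r"
proof -
  have "mpoly_eval (var_slice i 0 q) z = 0" if "in_upper z" for z
    using stable_upd_0_vanishes_everywhere[OF assms(2-4) that] assms(1)
    by (simp add: mpoly_eval_var_slice poly_var_poly flip: poly_0_coeff_0)
  then have "var_slice i 0 q = (\<lambda>_. 0)"
    by (intro mpoly_eq_0_if_vanishes_on_upper is_mpoly_var_slice assms(1))
  then have "\<alpha> i = 0 \<Longrightarrow> q \<alpha> = 0" for \<alpha>
    by (metis var_slice_def)
  then have q: "q = times_var i (div_var i q)"
    by (simp add: times_var_div_var)
  have "is_mpoly (div_var i q)"
    using assms(1) by (rule is_mpoly_div_var)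
  moreover have "stable (div_var i q)"
    unfolding stable_def
  proof (intro allI impI)
    fix z :: "'a \<Rightarrow> complex" assume "\<forall>j. 0 < Im (z j)"
    then have "mpoly_eval q z \<noteq> 0"
      using assms(2) by (simp add: stable_def)
    then show "mpoly_eval (div_var i q) z \<noteq> 0"
      using mpoly_eval_times_var[OF \<open>is_mpoly (div_var i q)\<close>, of i z] q by auto
  qed
  ultimately show ?thesis
    using q that by blast
qed

lemma stable_times_var_cmult:
  assumes "is_mpoly r" "stable r" "c \<noteq> 0"
  shows "stable (times_var i (\<lambda>\<alpha>. c * r \<alpha>))"
  unfolding stable_def
proof (intro allI impI)
  fix z :: "'a \<Rightarrow> complex" assume z: "\<forall>j. 0 < Im (z j)"
  then have "0 < Im (z i)" "mpoly_eval r z \<noteq> 0"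
    using assms(2) by (auto simp: stable_def)
  then have "z i \<noteq> 0" "mpoly_eval r z \<noteq> 0"
    by auto
  moreover have "is_mpoly (\<lambda>\<alpha>. c * r \<alpha>)"
    using is_mpoly_diag_op[OF assms(1)] by (simp add: diag_op_def)
  ultimately show "mpoly_eval (times_var i (\<lambda>\<alpha>. c * r \<alpha>)) z \<noteq> 0"
    using assms by (simp add: mpoly_eval_times_var mpoly_eval_cmult)
qed

lemma diag_falling_0_times_var: "diag_op (\<lambda>\<alpha>. falling_fact 0 (\<alpha> i)) (times_var i r) = (\<lambda>_. 0)"
  by (auto simp: diag_op_def times_var_def fun_eq_iff falling_fact_eq_0)

lemma diag_falling_Suc_times_var:
  "diag_op (\<lambda>\<alpha>. falling_fact (Suc b) (\<alpha> i)) (times_var i r) =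
     times_var i (\<lambda>\<alpha>. of_nat (Suc b) * diag_op (\<lambda>\<alpha>. falling_fact b (\<alpha> i)) r \<alpha>)"
proof
  fix \<alpha> :: "'a \<Rightarrow> nat"
  show "diag_op (\<lambda>\<alpha>. falling_fact (Suc b) (\<alpha> i)) (times_var i r) \<alpha> =
      times_var i (\<lambda>\<alpha>. of_nat (Suc b) * diag_op (\<lambda>\<alpha>. falling_fact b (\<alpha> i)) r \<alpha>) \<alpha>"
    by (cases "\<alpha> i") (simp_all add: diag_op_def times_var_def falling_fact_Suc_Suc)
qed

lemma stable_diag_falling_if_nonvanishing:
  assumes "is_mpoly q" "stable q" "\<And>z. in_upper z \<Longrightarrow> mpoly_eval q (z(i := 0)) \<noteq> 0"
  shows "stable (diag_op (\<lambda>\<alpha>. falling_fact b (\<alpha> i)) q)"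
  unfolding stable_def
proof (intro allI impI)
  fix z :: "'a \<Rightarrow> complex" assume z: "\<forall>j. 0 < Im (z j)"
  have "stable_poly (var_poly q z i)" "poly (var_poly q z i) 0 \<noteq> 0"
    using assms(2,3) z by (simp_all add: stable_poly_var_poly poly_var_poly)
  then show "mpoly_eval (diag_op (\<lambda>\<alpha>. falling_fact b (\<alpha> i)) q) z \<noteq> 0"
    using stable_poly_pderiv_shift_funpow[of _ 0 "z i" b] z
    by (simp add: mpoly_eval_diag_falling[OF assms(1)])
qed

lemma stable_diag_falling:
  assumes "is_mpoly q" "stable q"
  shows "stable (diag_op (\<lambda>\<alpha>. falling_fact b (\<alpha> i)) q) \<or>
    diag_op (\<lambda>\<alpha>. falling_fact b (\<alpha> i)) q = (\<lambda>_. 0)"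
  using assms
proof (induction b arbitrary: q rule: less_induct)
  case (less b q)
  show ?case
  proof (cases "\<forall>z. in_upper z \<longrightarrow> mpoly_eval q (z(i := 0)) \<noteq> 0")
    case True
    then show ?thesis
      using less.prems stable_diag_falling_if_nonvanishing by blast
  next
    case False
    then obtain r where r: "q = times_var i r" "is_mpoly r" "stable r"
      using less.prems stable_var_factor by metis
    show ?thesis
    proof (cases b)
      case 0
      then show ?thesis
        unfolding r(1) by (simp add: diag_falling_0_times_var)
    next
      case (Suc b')
      define r' where "r' = diag_op (\<lambda>\<alpha>. falling_fact b' (\<alpha> i)) r"
      have "stable r' \<or> r' = (\<lambda>_. 0)"
        using less.IH[of b' r] Suc r(2,3) unfolding r'_def by blast
      moreover have "is_mpoly r'"
        unfolding r'_def using r(2) by (rule is_mpoly_diag_op)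
      ultimately show ?thesis
        unfolding r(1) Suc diag_falling_Suc_times_var r'_def[symmetric]
        using stable_times_var_cmult[OF \<open>is_mpoly r'\<close> _ of_nat_neq_0] by (auto simp: times_var_def)
    qed
  qed
qed

corollary preserves_stability_diag_falling:
  "preserves_stability (diag_op (\<lambda>\<alpha>::'n::finite \<Rightarrow> nat. falling_fact b (\<alpha> i)))"
  unfolding preserves_stability_def using stable_diag_falling by blast

lemma preserves_stability_diag_scale_var:
  assumes "0 < s"
  shows "preserves_stability (diag_op (\<lambda>\<alpha>::'n::finite \<Rightarrow> nat. complex_of_real s ^ \<alpha> i))"
  unfolding preserves_stability_def
proof (intro allI impI disjI1)
  fix p :: "('n \<Rightarrow> nat) \<Rightarrow> complex" assume p: "is_mpoly p \<and> stable p"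
  show "stable (diag_op (\<lambda>\<alpha>. complex_of_real s ^ \<alpha> i) p)"
    unfolding stable_def
  proof (intro allI impI)
    fix z :: "'n \<Rightarrow> complex" assume "\<forall>j. 0 < Im (z j)"
    then have "\<forall>j. 0 < Im ((z(i := complex_of_real s * z i)) j)"
      using assms by simp
    then show "mpoly_eval (diag_op (\<lambda>\<alpha>. complex_of_real s ^ \<alpha> i) p) z \<noteq> 0"
      using p by (simp add: diag_op_def mpoly_eval_scale_var stable_def)
  qed
qed

lemma preserves_stability_diag_mult:
  assumes c: "preserves_stability (diag_op c)" and d: "preserves_stability (diag_op d)"
  shows "preserves_stability (diag_op (\<lambda>\<alpha>. c \<alpha> * d \<alpha>))"
  unfolding preserves_stability_def
proof (intro allI impI)
  fix p :: "('a \<Rightarrow> nat) \<Rightarrow> complex" assume p: "is_mpoly p \<and> stable p"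
  have "diag_op (\<lambda>\<alpha>. c \<alpha> * d \<alpha>) p = diag_op c (diag_op d p)"
    by (simp add: diag_op_def fun_eq_iff)
  moreover have "is_mpoly (diag_op d p)"
    using p by (simp add: is_mpoly_diag_op)
  moreover have "stable (diag_op d p) \<or> diag_op d p = (\<lambda>_. 0)"
    using d p by (simp add: preserves_stability_def)
  moreover have "diag_op c (\<lambda>_. 0) = (\<lambda>_. 0)"
    by (simp add: diag_op_def)
  ultimately show "stable (diag_op (\<lambda>\<alpha>. c \<alpha> * d \<alpha>) p) \<or> diag_op (\<lambda>\<alpha>. c \<alpha> * d \<alpha>) p = (\<lambda>_. 0)"
    using c unfolding preserves_stability_def by metis
qed

lemma preserves_stability_diag_prod:
  assumes "finite I" "\<And>i. i \<in> I \<Longrightarrow> preserves_stability (diag_op (m i))"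
  shows "preserves_stability (diag_op (\<lambda>\<alpha>. \<Prod>i\<in>I. m i \<alpha>))"
  using assms
proof (induction I rule: finite_induct)
  case empty
  show ?case
    by (simp add: preserves_stability_def diag_op_def)
next
  case (insert j I)
  then show ?case
    by (simp add: preserves_stability_diag_mult)
qed

lemma falling_multi_eq_prod:
  "complex_of_real (falling_multi \<beta> \<alpha>) = (\<Prod>i\<in>UNIV. falling_fact (\<beta> i) (\<alpha> i))"
proof (cases "\<forall>i. \<alpha> i \<le> \<beta> i")
  case True
  then show ?thesis
    by (simp add: falling_multi_def falling_fact_eq_fact_div)
next
  case False
  then obtain i where "\<beta> i < \<alpha> i"
    by (auto simp: not_le)
  then have "falling_fact (\<beta> i) (\<alpha> i) = 0"
    by (rule falling_fact_eq_0)
  then have "(\<Prod>i\<in>UNIV. falling_fact (\<beta> i) (\<alpha> i)) = 0"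
    by (meson UNIV_I finite prod_zero)
  moreover have "falling_multi \<beta> \<alpha> = 0"
    using False by (simp add: falling_multi_def)
  ultimately show ?thesis
    by simp
qed

text \<open>For beta_i = 0 the factor vanishes unless alpha_i = 0, so the scale 1/beta_i may be
  replaced by any positive number there.\<close>
lemma J_eq_prod:
  "complex_of_real (J \<alpha> \<beta>) =
     (\<Prod>i\<in>UNIV. falling_fact (\<beta> i) (\<alpha> i) * complex_of_real (inverse (real (max 1 (\<beta> i)))) ^ \<alpha> i)"
  unfolding J_def of_real_mult falling_multi_eq_prod of_real_prod prod.distrib[symmetric]
proof (intro prod.cong refl)
  fix i
  show "falling_fact (\<beta> i) (\<alpha> i) * complex_of_real (inverse (real (\<beta> i) ^ \<alpha> i)) =
      falling_fact (\<beta> i) (\<alpha> i) * complex_of_real (inverse (real (max 1 (\<beta> i)))) ^ \<alpha> i"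
    by (cases "\<beta> i = 0"; cases "\<alpha> i = 0")
      (simp_all add: falling_fact_eq_0 max_def power_inverse)
qed

theorem lemma5p2:
  fixes \<beta> :: "'n::finite \<Rightarrow> nat"
  shows "preserves_stability (diag_op (\<lambda>\<alpha>. complex_of_real (J \<alpha> \<beta>))) \<and>
         preserves_stability (diag_op (\<lambda>\<alpha>. complex_of_real (falling_multi \<beta> \<alpha>)))"
proof
  show "preserves_stability (diag_op (\<lambda>\<alpha>. complex_of_real (J \<alpha> \<beta>)))"
    unfolding J_eq_prod
    by (intro preserves_stability_diag_prod preserves_stability_diag_mult
        preserves_stability_diag_falling preserves_stability_diag_scale_var) simp_all
  show "preserves_stability (diag_op (\<lambda>\<alpha>. complex_of_real (falling_multi \<beta> \<alpha>)))"
    unfolding falling_multi_eq_prod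
    by (intro preserves_stability_diag_prod preserves_stability_diag_falling) simp
qed

end
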